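(* Let $k$ be a field and $\mathsf{E}$ a left strictly locally finite $k$-linear category. Then the class of cofinite right $\mathsf{E}$-modules is closed under extensions in the category of right $\mathsf{E}$-modules: if $0\to L\to M\to N\to0$ is a short exact sequence of right $\mathsf{E}$-modules with $L$ and $N$ cofinite, then $M$ is cofinite.
   Context: A small $k$-linear category $\mathsf{E}$ has $k$-vector spaces $\operatorname{Hom}_\mathsf{E}(x,y)$, $k$-bilinear associative composition and identities with $\mathrm{id}_x\ne0$. A right $\mathsf{E}$-module is a $k$-linear functor $N:\mathsf{E}^{op}\to k\text{-Vect}$ (action maps $\operatorname{Hom}_\mathsf{E}(x,y)\otimes_kN(y)\to N(x)$). Write $x\preceq y$ if there are $n\ge1$ and objects $x=z_0,\dots,z_n=y$ with $\operatorname{Hom}_\mathsf{E}(z_{i-1},z_i)\neq0$ for all $i$; $x\prec y$ means $x\preceq y$ and not $y\preceq x$. $\mathsf{E}$ is locally finite if all Hom spaces are finite-dimensional and every $\{z:x\preceq z\preceq y\}$ is finite; left strictly locally finite if moreover for every $y$ there is a finite set $X_y$ of objects with $x\prec y$ for $x\in X_y$ such that every $f:z\to y$ with $z\prec y$ equals $\sum_{i=1}^nh_ig_i$ ($n\ge0$) with $g_i:z\to x_i$, $h_i:x_i\to y$, $x_i\in X_y$. A right $\mathsf{E}$-module $N$ is cofinite if for every object $y$ there is a finite set of objects $A$ such that the action map $\operatorname{Hom}_\mathsf{E}(x,y)\otimes_kN(y)\to N(x)$ vanishes for all $x\notin A$. *)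

theory Defs
  imports Complex_Main
begin

(* All morphisms live in one ambient k-vector space 'm (scalar multiplication sc);
   Hom x y is a k-subspace of it, cmp g f is "g after f" for f : x -> y, g : y -> z,
   and ide x is the identity of x. *)
definition klinear_cat ::
  "('k::field \<Rightarrow> 'm::ab_group_add \<Rightarrow> 'm) \<Rightarrow> ('o \<Rightarrow> 'o \<Rightarrow> 'm set)
   \<Rightarrow> ('m \<Rightarrow> 'm \<Rightarrow> 'm) \<Rightarrow> ('o \<Rightarrow> 'm) \<Rightarrow> bool" where
  "klinear_cat sc Hom cmp ide \<longleftrightarrow>
     vector_space sc \<and>
     (\<forall>x y. module.subspace sc (Hom x y)) \<and>
     (\<forall>x y z f g. f \<in> Hom x y \<longrightarrow> g \<in> Hom y z \<longrightarrow> cmp g f \<in> Hom x z) \<and>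
     (\<forall>x y z f f' g c. f \<in> Hom x y \<longrightarrow> f' \<in> Hom x y \<longrightarrow> g \<in> Hom y z \<longrightarrow>
          cmp g (f + f') = cmp g f + cmp g f' \<and> cmp g (sc c f) = sc c (cmp g f)) \<and>
     (\<forall>x y z f g g' c. f \<in> Hom x y \<longrightarrow> g \<in> Hom y z \<longrightarrow> g' \<in> Hom y z \<longrightarrow>
          cmp (g + g') f = cmp g f + cmp g' f \<and> cmp (sc c g) f = sc c (cmp g f)) \<and>
     (\<forall>w x y z f g h. f \<in> Hom w x \<longrightarrow> g \<in> Hom x y \<longrightarrow> h \<in> Hom y z \<longrightarrow>
          cmp h (cmp g f) = cmp (cmp h g) f) \<and>
     (\<forall>x. ide x \<in> Hom x x \<and> ide x \<noteq> 0) \<and>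
     (\<forall>x y f. f \<in> Hom x y \<longrightarrow> cmp (ide y) f = f \<and> cmp f (ide x) = f)"

definition fin_dim :: "('k::field \<Rightarrow> 'm::ab_group_add \<Rightarrow> 'm) \<Rightarrow> 'm set \<Rightarrow> bool" where
  "fin_dim sc S \<longleftrightarrow> (\<exists>B. finite B \<and> B \<subseteq> S \<and> module.span sc B = S)"

definition cat_preceq :: "('o \<Rightarrow> 'o \<Rightarrow> 'm::zero set) \<Rightarrow> 'o \<Rightarrow> 'o \<Rightarrow> bool" where
  "cat_preceq Hom = tranclp (\<lambda>x y. Hom x y \<noteq> {0})"

definition cat_prec :: "('o \<Rightarrow> 'o \<Rightarrow> 'm::zero set) \<Rightarrow> 'o \<Rightarrow> 'o \<Rightarrow> bool" where
  "cat_prec Hom x y \<longleftrightarrow> cat_preceq Hom x y \<and> \<not> cat_preceq Hom y x"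

definition locally_finite_cat ::
  "('k::field \<Rightarrow> 'm::ab_group_add \<Rightarrow> 'm) \<Rightarrow> ('o \<Rightarrow> 'o \<Rightarrow> 'm set) \<Rightarrow> bool" where
  "locally_finite_cat sc Hom \<longleftrightarrow>
     (\<forall>x y. fin_dim sc (Hom x y)) \<and>
     (\<forall>x y. finite {z. cat_preceq Hom x z \<and> cat_preceq Hom z y})"

definition left_strictly_locally_finite ::
  "('k::field \<Rightarrow> 'm::ab_group_add \<Rightarrow> 'm) \<Rightarrow> ('o \<Rightarrow> 'o \<Rightarrow> 'm set) \<Rightarrow> ('m \<Rightarrow> 'm \<Rightarrow> 'm) \<Rightarrow> bool" where
  "left_strictly_locally_finite sc Hom cmp \<longleftrightarrow>
     locally_finite_cat sc Hom \<and>
     (\<forall>y. \<exists>X. finite X \<and> (\<forall>x\<in>X. cat_prec Hom x y) \<and>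
        (\<forall>z f. cat_prec Hom z y \<longrightarrow> f \<in> Hom z y \<longrightarrow>
           (\<exists>n::nat. \<exists>g h xs. f = (\<Sum>i<n. cmp (h i) (g i)) \<and>
              (\<forall>i<n. xs i \<in> X \<and> g i \<in> Hom z (xs i) \<and> h i \<in> Hom (xs i) y))))"

(* Right E-module N : E^op -> k-Vect.  N x is a k-subspace of an ambient k-vector space 'v
   (scalar multiplication scv); act f n \<in> N x is the action of f : x -> y on n \<in> N y. *)
definition right_module ::
  "('k::field \<Rightarrow> 'm::ab_group_add \<Rightarrow> 'm) \<Rightarrow> ('o \<Rightarrow> 'o \<Rightarrow> 'm set) \<Rightarrow> ('m \<Rightarrow> 'm \<Rightarrow> 'm) \<Rightarrow> ('o \<Rightarrow> 'm)
   \<Rightarrow> ('k \<Rightarrow> 'v::ab_group_add \<Rightarrow> 'v) \<Rightarrow> ('o \<Rightarrow> 'v set) \<Rightarrow> ('m \<Rightarrow> 'v \<Rightarrow> 'v) \<Rightarrow> bool" where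
  "right_module sc Hom cmp ide scv N act \<longleftrightarrow>
     vector_space scv \<and>
     (\<forall>x. module.subspace scv (N x)) \<and>
     (\<forall>x y f n. f \<in> Hom x y \<longrightarrow> n \<in> N y \<longrightarrow> act f n \<in> N x) \<and>
     (\<forall>x y f f' n c. f \<in> Hom x y \<longrightarrow> f' \<in> Hom x y \<longrightarrow> n \<in> N y \<longrightarrow>
          act (f + f') n = act f n + act f' n \<and> act (sc c f) n = scv c (act f n)) \<and>
     (\<forall>x y f n n' c. f \<in> Hom x y \<longrightarrow> n \<in> N y \<longrightarrow> n' \<in> N y \<longrightarrow>
          act f (n + n') = act f n + act f n' \<and> act f (scv c n) = scv c (act f n)) \<and>
     (\<forall>x y z f g n. f \<in> Hom x y \<longrightarrow> g \<in> Hom y z \<longrightarrow> n \<in> N z \<longrightarrow>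
          act (cmp g f) n = act f (act g n)) \<and>
     (\<forall>x n. n \<in> N x \<longrightarrow> act (ide x) n = n)"

definition rmod_hom ::
  "('o \<Rightarrow> 'o \<Rightarrow> 'm set) \<Rightarrow> ('k \<Rightarrow> 'a::ab_group_add \<Rightarrow> 'a) \<Rightarrow> ('o \<Rightarrow> 'a set) \<Rightarrow> ('m \<Rightarrow> 'a \<Rightarrow> 'a)
   \<Rightarrow> ('k \<Rightarrow> 'b::ab_group_add \<Rightarrow> 'b) \<Rightarrow> ('o \<Rightarrow> 'b set) \<Rightarrow> ('m \<Rightarrow> 'b \<Rightarrow> 'b)
   \<Rightarrow> ('o \<Rightarrow> 'a \<Rightarrow> 'b) \<Rightarrow> bool" where
  "rmod_hom Hom scA A actA scB B actB phi \<longleftrightarrow>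
     (\<forall>x a. a \<in> A x \<longrightarrow> phi x a \<in> B x) \<and>
     (\<forall>x a a' c. a \<in> A x \<longrightarrow> a' \<in> A x \<longrightarrow>
          phi x (a + a') = phi x a + phi x a' \<and> phi x (scA c a) = scB c (phi x a)) \<and>
     (\<forall>x y f a. f \<in> Hom x y \<longrightarrow> a \<in> A y \<longrightarrow> phi x (actA f a) = actB f (phi y a))"

definition short_exact ::
  "('o \<Rightarrow> 'a set) \<Rightarrow> ('o \<Rightarrow> 'b::zero set) \<Rightarrow> ('o \<Rightarrow> 'c::zero set)
   \<Rightarrow> ('o \<Rightarrow> 'a \<Rightarrow> 'b) \<Rightarrow> ('o \<Rightarrow> 'b \<Rightarrow> 'c) \<Rightarrow> bool" where
  "short_exact L M N phi psi \<longleftrightarrow>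
     (\<forall>x. inj_on (phi x) (L x) \<and>
          phi x ` L x = {m \<in> M x. psi x m = 0} \<and>
          psi x ` M x = N x)"

definition cofinite_module ::
  "('o \<Rightarrow> 'o \<Rightarrow> 'm set) \<Rightarrow> ('o \<Rightarrow> 'v::zero set) \<Rightarrow> ('m \<Rightarrow> 'v \<Rightarrow> 'v) \<Rightarrow> bool" where
  "cofinite_module Hom N act \<longleftrightarrow>
     (\<forall>y. \<exists>A. finite A \<and> (\<forall>x. x \<notin> A \<longrightarrow> (\<forall>f\<in>Hom x y. \<forall>n\<in>N y. act f n = 0)))"

end

theory Submission imports Defs begin

(* Fix y.  The elements h m with h : t -> y and m in M y form an action-closed family U t
   inside M t, and U y contains M y.  Outside the finite set S of objects t at which some
   h : t -> y acts nontrivially on N y, U t maps to zero in N t, hence lies in the image of L t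
   and is annihilated by all but finitely many objects because L is cofinite.  At an object t
   of S, a nonzero f : x -> t with x outside the finite strong component of t has x strictly
   below t, so f factors through the finite set X_t of the left strict local finiteness; thus
   cofinite annihilation of U at the objects strictly below t gives it at t.  The strict order
   is well founded on the finite set S, so induction along it reaches every object, in
   particular y. *)

lemma klinear_cat_vector_space: "klinear_cat sc Hom cmp ide \<Longrightarrow> vector_space sc"
  by (simp add: klinear_cat_def)

lemma klinear_cat_Hom_subspace:
  "klinear_cat sc Hom cmp ide \<Longrightarrow> module.subspace sc (Hom x y)"
  by (simp add: klinear_cat_def)

lemma klinear_cat_zero_in_Hom: "klinear_cat sc Hom cmp ide \<Longrightarrow> 0 \<in> Hom x y"
  using module.subspace_0 klinear_cat_Hom_subspace klinear_cat_vector_space module_iff_vector_space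
  by metis

lemma klinear_cat_cmp_in_Hom:
  "klinear_cat sc Hom cmp ide \<Longrightarrow> f \<in> Hom x y \<Longrightarrow> g \<in> Hom y z \<Longrightarrow> cmp g f \<in> Hom x z"
  by (simp add: klinear_cat_def)

lemma klinear_cat_ide_in_Hom: "klinear_cat sc Hom cmp ide \<Longrightarrow> ide x \<in> Hom x x"
  by (simp add: klinear_cat_def)

lemma cat_prec_if_nonzero_Hom:
  assumes "f \<in> Hom x y" "f \<noteq> 0" "x \<notin> {z. cat_preceq Hom y z \<and> cat_preceq Hom z y}"
  shows "cat_prec Hom x y"
proof -
  have "cat_preceq Hom x y"
    using assms(1,2) unfolding cat_preceq_def by (metis singletonD tranclp.r_into_trancl)
  with assms(3) show ?thesis
    unfolding cat_prec_def by blast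
qed

lemma cat_prec_trans: "cat_prec Hom a b \<Longrightarrow> cat_prec Hom b c \<Longrightarrow> cat_prec Hom a c"
  unfolding cat_prec_def cat_preceq_def by (meson tranclp_trans)

lemma wf_cat_prec_on_finite:
  assumes "finite S"
  shows "wf {(s, t). s \<in> S \<and> t \<in> S \<and> cat_prec Hom s t}" (is "wf ?r")
proof (rule finite_acyclic_wf)
  show "finite ?r"
    by (rule finite_subset[of _ "S \<times> S"]) (use assms in auto)
  have "trans ?r"
    by (auto intro: transI cat_prec_trans)
  then show "acyclic ?r"
    by (simp add: acyclic_irrefl irrefl_def cat_prec_def)
qed

lemma left_strictly_locally_finite_finite_component:
  "left_strictly_locally_finite sc Hom cmp \<Longrightarrow> finite {z. cat_preceq Hom t z \<and> cat_preceq Hom z t}"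
  by (simp add: left_strictly_locally_finite_def locally_finite_cat_def)

lemma left_strictly_locally_finite_factorization:
  assumes "left_strictly_locally_finite sc Hom cmp"
  obtains X where "finite X" "\<And>x. x \<in> X \<Longrightarrow> cat_prec Hom x y"
    "\<And>z f. cat_prec Hom z y \<Longrightarrow> f \<in> Hom z y \<Longrightarrow>
       \<exists>n::nat. \<exists>g h xs. f = (\<Sum>i<n. cmp (h i) (g i)) \<and>
         (\<forall>i<n. xs i \<in> X \<and> g i \<in> Hom z (xs i) \<and> h i \<in> Hom (xs i) y)"
proof -
  from assms have "\<exists>X. finite X \<and> (\<forall>x\<in>X. cat_prec Hom x y) \<and>
        (\<forall>z f. cat_prec Hom z y \<longrightarrow> f \<in> Hom z y \<longrightarrow>
           (\<exists>n::nat. \<exists>g h xs. f = (\<Sum>i<n. cmp (h i) (g i)) \<and>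
              (\<forall>i<n. xs i \<in> X \<and> g i \<in> Hom z (xs i) \<and> h i \<in> Hom (xs i) y)))"
    unfolding left_strictly_locally_finite_def by (elim conjE spec)
  then show ?thesis
    using that by blast
qed

lemma right_module_act_closed:
  "right_module sc Hom cmp ide scv N act \<Longrightarrow> f \<in> Hom x y \<Longrightarrow> n \<in> N y \<Longrightarrow> act f n \<in> N x"
  by (simp add: right_module_def)

lemma right_module_act_cmp:
  "right_module sc Hom cmp ide scv N act \<Longrightarrow> f \<in> Hom x y \<Longrightarrow> g \<in> Hom y z \<Longrightarrow> n \<in> N z \<Longrightarrow>
     act (cmp g f) n = act f (act g n)"
  by (simp add: right_module_def)

lemma right_module_act_ide:
  "right_module sc Hom cmp ide scv N act \<Longrightarrow> n \<in> N x \<Longrightarrow> act (ide x) n = n"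
  by (simp add: right_module_def)

lemma right_module_act_add:
  "right_module sc Hom cmp ide scv N act \<Longrightarrow> f \<in> Hom x y \<Longrightarrow> f' \<in> Hom x y \<Longrightarrow> n \<in> N y \<Longrightarrow>
     act (f + f') n = act f n + act f' n"
  by (simp add: right_module_def)

lemma right_module_zero: "right_module sc Hom cmp ide scv N act \<Longrightarrow> 0 \<in> N x"
  unfolding right_module_def using module.subspace_0 module_iff_vector_space by metis

lemma right_module_act_zero:
  assumes K: "klinear_cat sc Hom cmp ide" and M: "right_module sc Hom cmp ide scv N act"
    and n: "n \<in> N y"
  shows "act 0 n = 0"
proof -
  have "act (0 + 0) n = act 0 n + act 0 n"
    using right_module_act_add[OF M _ _ n] klinear_cat_zero_in_Hom[OF K] by blast
  then show ?thesis by simp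
qed

lemma right_module_act_sum:
  assumes K: "klinear_cat sc Hom cmp ide" and M: "right_module sc Hom cmp ide scv N act"
    and f: "\<And>i. i \<in> I \<Longrightarrow> f i \<in> Hom x y" and n: "n \<in> N y"
  shows "act (\<Sum>i\<in>I. f i) n = (\<Sum>i\<in>I. act (f i) n)"
  using f
proof (induction I rule: infinite_finite_induct)
  case (insert i I)
  have "sum f I \<in> Hom x y"
    using module.subspace_sum[OF _ klinear_cat_Hom_subspace[OF K]] insert
      klinear_cat_vector_space[OF K] module_iff_vector_space by blast
  then have "act (f i + sum f I) n = act (f i) n + act (sum f I) n"
    using right_module_act_add[OF M _ _ n] insert.prems by blast
  with insert show ?case by simp
qed (simp_all add: right_module_act_zero[OF K M n])

lemma rmod_hom_zero:
  assumes "rmod_hom Hom scA A actA scB B actB phi" "0 \<in> A x"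
  shows "phi x 0 = 0"
proof -
  have "phi x (0 + 0) = phi x 0 + phi x 0"
    using assms unfolding rmod_hom_def by blast
  then show ?thesis by simp
qed

definition cofinitely_annihilated ::
  "('o \<Rightarrow> 'o \<Rightarrow> 'm set) \<Rightarrow> ('m \<Rightarrow> 'v \<Rightarrow> 'v::zero) \<Rightarrow> 'o \<Rightarrow> 'v set \<Rightarrow> bool" where
  "cofinitely_annihilated Hom act t U \<longleftrightarrow>
     (\<exists>A. finite A \<and> (\<forall>x. x \<notin> A \<longrightarrow> (\<forall>f\<in>Hom x t. \<forall>u\<in>U. act f u = 0)))"

lemma cofinite_module_iff_cofinitely_annihilated:
  "cofinite_module Hom N act \<longleftrightarrow> (\<forall>y. cofinitely_annihilated Hom act y (N y))"
  unfolding cofinite_module_def cofinitely_annihilated_def ..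

lemma cofinitely_annihilated_subset:
  "cofinitely_annihilated Hom act t U \<Longrightarrow> V \<subseteq> U \<Longrightarrow> cofinitely_annihilated Hom act t V"
  unfolding cofinitely_annihilated_def by blast

lemma cofinitely_annihilated_image:
  assumes hom: "rmod_hom Hom scA A actA scB B actB phi"
    and A: "right_module sc Hom cmp ide scA A actA"
    and U: "U \<subseteq> A t" and ann: "cofinitely_annihilated Hom actA t U"
  shows "cofinitely_annihilated Hom actB t (phi t ` U)"
proof -
  obtain Z where Z: "finite Z" "\<And>x f u. x \<notin> Z \<Longrightarrow> f \<in> Hom x t \<Longrightarrow> u \<in> U \<Longrightarrow> actA f u = 0"
    using ann unfolding cofinitely_annihilated_def by blast
  have "actB f (phi t u) = 0" if "x \<notin> Z" "f \<in> Hom x t" "u \<in> U" for x f u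
  proof -
    have "actB f (phi t u) = phi x (actA f u)"
      using hom that U unfolding rmod_hom_def by auto
    also have "\<dots> = 0"
      using Z(2)[OF that] rmod_hom_zero[OF hom right_module_zero[OF A]] by simp
    finally show ?thesis .
  qed
  then show ?thesis
    using Z(1) unfolding cofinitely_annihilated_def by blast
qed

definition act_closed ::
  "('o \<Rightarrow> 'o \<Rightarrow> 'm set) \<Rightarrow> ('m \<Rightarrow> 'v \<Rightarrow> 'v) \<Rightarrow> ('o \<Rightarrow> 'v set) \<Rightarrow> bool" where
  "act_closed Hom act U \<longleftrightarrow> (\<forall>x y f u. f \<in> Hom x y \<longrightarrow> u \<in> U y \<longrightarrow> act f u \<in> U x)"

definition action_image ::
  "('o \<Rightarrow> 'o \<Rightarrow> 'm set) \<Rightarrow> ('m \<Rightarrow> 'v \<Rightarrow> 'v) \<Rightarrow> ('o \<Rightarrow> 'v set) \<Rightarrow> 'o \<Rightarrow> 'o \<Rightarrow> 'v set" where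
  "action_image Hom act N y t = {act h n | h n. h \<in> Hom t y \<and> n \<in> N y}"

lemma act_closed_action_image:
  assumes K: "klinear_cat sc Hom cmp ide" and M: "right_module sc Hom cmp ide scv N act"
  shows "act_closed Hom act (action_image Hom act N y)"
  unfolding act_closed_def
proof (intro allI impI)
  fix x t f u assume f: "f \<in> Hom x t" and "u \<in> action_image Hom act N y t"
  then obtain h n where h: "h \<in> Hom t y" and n: "n \<in> N y" and u: "u = act h n"
    unfolding action_image_def by blast
  have "act f u = act (cmp h f) n"
    unfolding u using right_module_act_cmp[OF M f h n] by simp
  then show "act f u \<in> action_image Hom act N y x"
    unfolding action_image_def using klinear_cat_cmp_in_Hom[OF K f h] n by blast
qed

lemma action_image_subset:
  assumes "right_module sc Hom cmp ide scv N act"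
  shows "action_image Hom act N y t \<subseteq> N t"
  unfolding action_image_def using right_module_act_closed[OF assms] by blast

lemma subset_action_image_self:
  assumes K: "klinear_cat sc Hom cmp ide" and M: "right_module sc Hom cmp ide scv N act"
  shows "N y \<subseteq> action_image Hom act N y y"
proof
  fix n assume n: "n \<in> N y"
  then have "n = act (ide y) n"
    by (simp add: right_module_act_ide[OF M])
  then show "n \<in> action_image Hom act N y y"
    unfolding action_image_def using klinear_cat_ide_in_Hom[OF K] n by blast
qed

lemma short_exact_action_image_subset:
  assumes M: "right_module sc Hom cmp ide scM M actM"
    and psi: "rmod_hom Hom scM M actM scN N actN psi"
    and exact: "short_exact L M N phi psi"
    and vanish: "\<forall>h\<in>Hom t y. \<forall>n\<in>N y. actN h n = 0"
  shows "action_image Hom actM M y t \<subseteq> phi t ` L t"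
proof
  fix u assume "u \<in> action_image Hom actM M y t"
  then obtain h m where h: "h \<in> Hom t y" and m: "m \<in> M y" and u: "u = actM h m"
    unfolding action_image_def by blast
  have "psi y m \<in> N y"
    using exact m unfolding short_exact_def by blast
  then have "psi t u = 0"
    using psi h m vanish unfolding u rmod_hom_def by simp
  then show "u \<in> phi t ` L t"
    using exact right_module_act_closed[OF M h m] unfolding u short_exact_def by blast
qed

lemma act_closed_act_sum_cmp_eq_zero:
  assumes K: "klinear_cat sc Hom cmp ide" and M: "right_module sc Hom cmp ide scv N act"
    and U: "act_closed Hom act U" "\<And>s. U s \<subseteq> N s"
    and gh: "\<forall>i<n. g i \<in> Hom x (xs i) \<and> h i \<in> Hom (xs i) t"
    and ann: "\<forall>i<n. \<forall>f\<in>Hom x (xs i). \<forall>v\<in>U (xs i). act f v = 0"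
    and u: "u \<in> U t"
  shows "act (\<Sum>i<n. cmp (h i) (g i)) u = 0"
proof -
  have u_N: "u \<in> N t"
    using U(2) u by blast
  have "act (\<Sum>i<n. cmp (h i) (g i)) u = (\<Sum>i<n. act (cmp (h i) (g i)) u)"
    by (rule right_module_act_sum[OF K M _ u_N])
      (use gh klinear_cat_cmp_in_Hom[OF K] in blast)
  also have "\<dots> = (\<Sum>i<n. act (g i) (act (h i) u))"
    using gh right_module_act_cmp[OF M _ _ u_N] by (intro sum.cong) auto
  also have "\<dots> = 0"
  proof (intro sum.neutral ballI)
    fix i assume "i \<in> {..<n}"
    moreover have "act (h i) u \<in> U (xs i)" if "i < n"
      using U(1) gh that u unfolding act_closed_def by blast
    ultimately show "act (g i) (act (h i) u) = 0"
      using gh ann by blast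
  qed
  finally show ?thesis .
qed

lemma cofinitely_annihilated_if_below:
  assumes K: "klinear_cat sc Hom cmp ide" and E: "left_strictly_locally_finite sc Hom cmp"
    and M: "right_module sc Hom cmp ide scv N act"
    and U: "act_closed Hom act U" "\<And>s. U s \<subseteq> N s"
    and below: "\<And>s. cat_prec Hom s t \<Longrightarrow> cofinitely_annihilated Hom act s (U s)"
  shows "cofinitely_annihilated Hom act t (U t)"
proof -
  obtain X where X: "finite X" "\<And>s. s \<in> X \<Longrightarrow> cat_prec Hom s t"
    and factor: "\<And>z f. cat_prec Hom z t \<Longrightarrow> f \<in> Hom z t \<Longrightarrow>
       \<exists>n::nat. \<exists>g h xs. f = (\<Sum>i<n. cmp (h i) (g i)) \<and>
         (\<forall>i<n. xs i \<in> X \<and> g i \<in> Hom z (xs i) \<and> h i \<in> Hom (xs i) t)"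
    by (rule left_strictly_locally_finite_factorization[OF E, where y = t]) (rule that)
  have "\<forall>s\<in>X. \<exists>A. finite A \<and> (\<forall>x. x \<notin> A \<longrightarrow> (\<forall>f\<in>Hom x s. \<forall>u\<in>U s. act f u = 0))"
    using below X(2) unfolding cofinitely_annihilated_def by blast
  from bchoice[OF this] obtain Z where
    Z: "\<forall>s\<in>X. finite (Z s) \<and> (\<forall>x. x \<notin> Z s \<longrightarrow> (\<forall>f\<in>Hom x s. \<forall>u\<in>U s. act f u = 0))" ..
  define C where "C = {z. cat_preceq Hom t z \<and> cat_preceq Hom z t}"
  have "finite C"
    unfolding C_def by (rule left_strictly_locally_finite_finite_component[OF E])
  then have finite: "finite (C \<union> (\<Union>s\<in>X. Z s))"
    using X(1) Z by simp
  have vanish: "act f u = 0"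
    if x: "x \<notin> C \<union> (\<Union>s\<in>X. Z s)" and f: "f \<in> Hom x t" and u: "u \<in> U t" for x f u
  proof (cases "f = 0")
    case True
    then show ?thesis using right_module_act_zero[OF K M] u U(2) by blast
  next
    case False
    have "x \<notin> C"
      using x by blast
    then have "cat_prec Hom x t"
      unfolding C_def by (rule cat_prec_if_nonzero_Hom[where Hom = Hom, OF f False])
    from factor[OF this f] obtain n :: nat and g h xs where f_eq: "f = (\<Sum>i<n. cmp (h i) (g i))"
      and gh: "\<forall>i<n. xs i \<in> X \<and> g i \<in> Hom x (xs i) \<and> h i \<in> Hom (xs i) t"
      by blast
    have ann: "\<forall>i<n. \<forall>f\<in>Hom x (xs i). \<forall>v\<in>U (xs i). act f v = 0"
    proof (intro allI impI)
      fix i assume "i < n"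
      with gh x have "xs i \<in> X" "x \<notin> Z (xs i)"
        by auto
      with Z show "\<forall>f\<in>Hom x (xs i). \<forall>v\<in>U (xs i). act f v = 0"
        by blast
    qed
    have "\<forall>i<n. g i \<in> Hom x (xs i) \<and> h i \<in> Hom (xs i) t"
      using gh by blast
    then show ?thesis
      unfolding f_eq by (rule act_closed_act_sum_cmp_eq_zero[OF K M U _ ann u])
  qed
  show ?thesis
    unfolding cofinitely_annihilated_def using finite vanish by blast
qed

lemma cofinitely_annihilated_everywhere:
  assumes K: "klinear_cat sc Hom cmp ide" and E: "left_strictly_locally_finite sc Hom cmp"
    and M: "right_module sc Hom cmp ide scv N act"
    and U: "act_closed Hom act U" "\<And>s. U s \<subseteq> N s"
    and S: "finite S" "\<And>s. s \<notin> S \<Longrightarrow> cofinitely_annihilated Hom act s (U s)"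
  shows "cofinitely_annihilated Hom act t (U t)"
  using wf_cat_prec_on_finite[OF S(1), where Hom = Hom]
proof (induction t rule: wf_induct_rule)
  case (less t)
  show ?case
  proof (cases "t \<in> S")
    case True
    have "cofinitely_annihilated Hom act s (U s)" if "cat_prec Hom s t" for s
      using less.IH[of s] S(2)[of s] True that by blast
    then show ?thesis
      by (rule cofinitely_annihilated_if_below[OF K E M U])
  qed (fact S(2))
qed

theorem lemma6p3:
  fixes sc :: "'k::field \<Rightarrow> 'm::ab_group_add \<Rightarrow> 'm"
    and Hom :: "'o \<Rightarrow> 'o \<Rightarrow> 'm set" and cmp :: "'m \<Rightarrow> 'm \<Rightarrow> 'm" and ide :: "'o \<Rightarrow> 'm"
    and scL :: "'k \<Rightarrow> 'a::ab_group_add \<Rightarrow> 'a" and L :: "'o \<Rightarrow> 'a set" and actL :: "'m \<Rightarrow> 'a \<Rightarrow> 'a"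
    and scM :: "'k \<Rightarrow> 'b::ab_group_add \<Rightarrow> 'b" and M :: "'o \<Rightarrow> 'b set" and actM :: "'m \<Rightarrow> 'b \<Rightarrow> 'b"
    and scN :: "'k \<Rightarrow> 'c::ab_group_add \<Rightarrow> 'c" and N :: "'o \<Rightarrow> 'c set" and actN :: "'m \<Rightarrow> 'c \<Rightarrow> 'c"
    and phi :: "'o \<Rightarrow> 'a \<Rightarrow> 'b" and psi :: "'o \<Rightarrow> 'b \<Rightarrow> 'c"
  assumes "klinear_cat sc Hom cmp ide"
    and "left_strictly_locally_finite sc Hom cmp"
    and "right_module sc Hom cmp ide scL L actL"
    and "right_module sc Hom cmp ide scM M actM"
    and "right_module sc Hom cmp ide scN N actN"
    and "rmod_hom Hom scL L actL scM M actM phi"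
    and "rmod_hom Hom scM M actM scN N actN psi"
    and "short_exact L M N phi psi"
    and "cofinite_module Hom L actL"
    and "cofinite_module Hom N actN"
  shows "cofinite_module Hom M actM"
  unfolding cofinite_module_iff_cofinitely_annihilated
proof
  fix y
  obtain S where S: "finite S" "\<forall>t. t \<notin> S \<longrightarrow> (\<forall>h\<in>Hom t y. \<forall>n\<in>N y. actN h n = 0)"
    using assms(10) unfolding cofinite_module_def by blast
  have "cofinitely_annihilated Hom actM t (action_image Hom actM M y t)" if "t \<notin> S" for t
  proof (rule cofinitely_annihilated_subset)
    have "cofinitely_annihilated Hom actL t (L t)"
      using assms(9) unfolding cofinite_module_iff_cofinitely_annihilated ..
    then show "cofinitely_annihilated Hom actM t (phi t ` L t)"
      by (rule cofinitely_annihilated_image[OF assms(6,3) subset_refl])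
    show "action_image Hom actM M y t \<subseteq> phi t ` L t"
      using S(2) that by (intro short_exact_action_image_subset[OF assms(4,7,8)]) blast
  qed
  then have "cofinitely_annihilated Hom actM y (action_image Hom actM M y y)"
    by (rule cofinitely_annihilated_everywhere[OF assms(1,2,4) act_closed_action_image[OF assms(1,4)]
          action_image_subset[OF assms(4)] S(1)])
  then show "cofinitely_annihilated Hom actM y (M y)"
    by (rule cofinitely_annihilated_subset[OF _ subset_action_image_self[OF assms(1,4)]])
qed

end
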